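(* Let $G$ be an odd unicyclic graph on $n$ vertices $1,2,\ldots,n$ and edges $e_1,\ldots,e_n$, with cycle $C$ and incidence matrix $M$. Then $M$ is invertible and $M^{-1}=[a_{i,j}]$ is given by $$a_{i,j}=\begin{cases}\frac{(-1)^{d(e_i,j)}}{2} & \text{if } e_i\in C,\\ 0 & \text{if } e_i\notin C \text{ and } j\in G\setminus e_i[C],\\ (-1)^{d(e_i,j)} & \text{if } e_i\notin C\text{ and } j\notin G\setminus e_i[C].\end{cases}$$
   Context: A unicyclic graph on $n$ vertices is a simple connected graph with $n$ edges; it is odd if its unique cycle $C$ has odd length. The incidence matrix $M$ is the $n\times n$ matrix with $(i,j)$-entry $1$ if vertex $i$ is incident with edge $e_j$ and $0$ otherwise. For a vertex $j$ and edge $e_i=\{l_i,m_i\}$, $d(j,e_i)=d(e_i,j):=\min\{d(j,l_i),d(j,m_i)\}$ where $d$ is graph distance. For an edge $e$ not on $C$, $G\setminus e$ has two components; $G\setminus e[C]$ is the one containing $C$. *)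

theory Defs
  imports "Jordan_Normal_Form.Matrix"
begin

definition walk :: "nat set set \<Rightarrow> nat list \<Rightarrow> bool" where
  "walk E xs \<longleftrightarrow> xs \<noteq> [] \<and> (\<forall>i. Suc i < length xs \<longrightarrow> {xs ! i, xs ! Suc i} \<in> E)"

definition reachable :: "nat set set \<Rightarrow> nat \<Rightarrow> nat \<Rightarrow> bool" where
  "reachable E u v \<longleftrightarrow> (\<exists>xs. walk E xs \<and> hd xs = u \<and> last xs = v)"

definition gdist :: "nat set set \<Rightarrow> nat \<Rightarrow> nat \<Rightarrow> nat" where
  "gdist E u v = (LEAST k. \<exists>xs. walk E xs \<and> hd xs = u \<and> last xs = v \<and> length xs = Suc k)"

definition edge_dist :: "nat set set \<Rightarrow> nat set \<Rightarrow> nat \<Rightarrow> nat" where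
  "edge_dist E e v = Min ((\<lambda>u. gdist E u v) ` e)"

definition is_cycle :: "nat set set \<Rightarrow> nat list \<Rightarrow> bool" where
  "is_cycle E cs \<longleftrightarrow> length cs \<ge> 3 \<and> distinct cs \<and>
     (\<forall>i < length cs. {cs ! i, cs ! ((i + 1) mod length cs)} \<in> E)"

definition cycle_edges :: "nat list \<Rightarrow> nat set set" where
  "cycle_edges cs = {{cs ! i, cs ! ((i + 1) mod length cs)} | i. i < length cs}"

text \<open>Simple connected graph on vertices {0..<n} whose edges are e 0, ..., e (n-1),
  pairwise distinct (so exactly n edges): a unicyclic graph.\<close>
definition unicyclic :: "nat \<Rightarrow> (nat \<Rightarrow> nat set) \<Rightarrow> bool" where
  "unicyclic n e \<longleftrightarrow> inj_on e {..<n} \<and>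
     (\<forall>i<n. \<exists>u v. e i = {u, v} \<and> u \<noteq> v \<and> u < n \<and> v < n) \<and>
     (\<forall>u<n. \<forall>v<n. reachable (e ` {..<n}) u v)"

definition comp_C :: "nat set set \<Rightarrow> nat set \<Rightarrow> nat list \<Rightarrow> nat set" where
  "comp_C E f cs = {v. \<exists>c \<in> set cs. reachable (E - {f}) c v}"

definition incidence_mat :: "nat \<Rightarrow> (nat \<Rightarrow> nat set) \<Rightarrow> real mat" where
  "incidence_mat n e = mat n n (\<lambda>(i, j). if i \<in> e j then 1 else 0)"

definition claimed_inverse :: "nat \<Rightarrow> (nat \<Rightarrow> nat set) \<Rightarrow> nat list \<Rightarrow> real mat" where
  "claimed_inverse n e cs = mat n n (\<lambda>(i, j).
     let E = e ` {..<n}; d = edge_dist E (e i) j in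
     if e i \<in> cycle_edges cs then (-1) ^ d / 2
     else if j \<in> comp_C E (e i) cs then 0
     else (-1) ^ d)"

end

(* Column k of the incidence matrix M has its two ones in the rows of the endpoints a, b of e_k,
   so entry (i, k) of A M, for A the claimed inverse, is a_{i,a} + a_{i,b}. For i = k both edge
   distances vanish and the sum is 1/2 + 1/2, or 0 + 1 because exactly one endpoint of an edge off
   C lies in G \ e_k[C]. For i <> k it suffices that d(e_i,a) + d(e_i,b) is odd whenever the two
   entries do not both vanish.

   Deleting a cycle edge from G leaves a connected graph with n - 1 edges, and such a graph has
   no closed walk of odd length: pruning leaves shows that a connected graph with an odd closed
   walk has at least as many edges as vertices. If f = e_i lies on C, shortest walks in G - f from
   the endpoints of f to a and to b, the path C - f of even length joining those endpoints and
   the edge ab would close up to an odd closed walk in G - f. If f is not on C and a, b lie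
   outside G \ f[C], both shortest walks start at the same endpoint of f and never meet C, so
   they give an odd closed walk in G minus a cycle edge. *)

theory Submission
  imports Defs "Jordan_Normal_Form.Determinant"
begin

section \<open>Walks of prescribed length\<close>

lemma walk_Cons_Cons [simp]: "walk E (x # y # xs) \<longleftrightarrow> {x, y} \<in> E \<and> walk E (y # xs)"
proof
  assume "walk E (x # y # xs)"
  then show "{x, y} \<in> E \<and> walk E (y # xs)"
    unfolding walk_def
    by (metis Suc_less_eq length_Cons list.distinct(1) nth_Cons_0 nth_Cons_Suc zero_less_Suc)
next
  assume "{x, y} \<in> E \<and> walk E (y # xs)"
  then show "walk E (x # y # xs)"
    unfolding walk_def by (auto simp: less_Suc_eq_0_disj)
qed

definition has_walk :: "nat set set \<Rightarrow> nat \<Rightarrow> nat \<Rightarrow> nat \<Rightarrow> bool" where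
  "has_walk E u v k \<longleftrightarrow> (\<exists>xs. walk E xs \<and> hd xs = u \<and> last xs = v \<and> length xs = Suc k)"

lemma has_walk_0 [simp]: "has_walk E u v 0 \<longleftrightarrow> u = v"
  unfolding has_walk_def walk_def by (auto simp: length_Suc_conv intro: exI[of _ "[u]"])

lemma has_walk_Suc: "has_walk E u v (Suc k) \<longleftrightarrow> (\<exists>w. {u, w} \<in> E \<and> has_walk E w v k)"
proof
  assume "has_walk E u v (Suc k)"
  then obtain w ys where "walk E (u # w # ys)" "last (w # ys) = v" "length ys = k"
    unfolding has_walk_def by (auto simp: length_Suc_conv)
  then show "\<exists>w. {u, w} \<in> E \<and> has_walk E w v k"
    unfolding has_walk_def by (intro exI[of _ w]) (auto intro: exI[of _ "w # ys"])
next
  assume "\<exists>w. {u, w} \<in> E \<and> has_walk E w v k"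
  then obtain w xs where "{u, w} \<in> E" "walk E xs" "hd xs = w" "last xs = v" "length xs = Suc k"
    unfolding has_walk_def by blast
  then show "has_walk E u v (Suc k)"
    unfolding has_walk_def by (intro exI[of _ "u # xs"]) (cases xs, auto)
qed

lemma has_walk_trans: "has_walk E u v k \<Longrightarrow> has_walk E v w l \<Longrightarrow> has_walk E u w (k + l)"
  by (induction k arbitrary: u) (auto simp: has_walk_Suc)

lemma has_walk_sym: "has_walk E u v k \<Longrightarrow> has_walk E v u k"
proof (induction k arbitrary: u)
  case (Suc k)
  then obtain w where "{w, u} \<in> E" "has_walk E v w k"
    by (auto simp: has_walk_Suc insert_commute)
  then show ?case using has_walk_trans[of E v w k u 1] by (simp add: has_walk_Suc)
qed simp

lemma has_walk_mono: "has_walk E u v k \<Longrightarrow> E \<subseteq> E' \<Longrightarrow> has_walk E' u v k"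
  by (induction k arbitrary: u) (auto simp: has_walk_Suc)

lemma reachable_iff_has_walk: "reachable E u v \<longleftrightarrow> (\<exists>k. has_walk E u v k)"
  unfolding reachable_def has_walk_def by (metis length_greater_0_conv Suc_pred walk_def)

lemma gdist_eq_Least: "gdist E u v = (LEAST k. has_walk E u v k)"
  unfolding gdist_def has_walk_def ..

lemma reachable_refl: "reachable E u u"
  unfolding reachable_iff_has_walk by (auto intro: exI[of _ 0])

lemma reachable_sym: "reachable E u v \<Longrightarrow> reachable E v u"
  unfolding reachable_iff_has_walk by (blast intro: has_walk_sym)

lemma reachable_trans: "reachable E u v \<Longrightarrow> reachable E v w \<Longrightarrow> reachable E u w"
  unfolding reachable_iff_has_walk by (blast intro: has_walk_trans)

lemma gdist_le: "has_walk E u v k \<Longrightarrow> gdist E u v \<le> k"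
  unfolding gdist_eq_Least by (rule Least_le)

lemma gdist_refl [simp]: "gdist E u u = 0"
  using gdist_le[of E u u 0] by simp

lemma has_walk_gdist: "reachable E u v \<Longrightarrow> has_walk E u v (gdist E u v)"
  unfolding gdist_eq_Least reachable_iff_has_walk by (rule LeastI_ex)

lemma has_walk_minus_edge_cases:
  "has_walk E u v k \<Longrightarrow> has_walk (E - {f}) u v k \<or> (\<exists>z\<in>f. \<exists>l<k. has_walk (E - {f}) z v l)"
proof (induction k arbitrary: u)
  case (Suc k)
  then obtain w where w: "{u, w} \<in> E" "has_walk E w v k" by (auto simp: has_walk_Suc)
  from Suc.IH[OF w(2)] show ?case
  proof
    assume walk: "has_walk (E - {f}) w v k"
    show ?case
    proof (cases "{u, w} = f")
      case True
      then show ?thesis using walk by blast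
    next
      case False
      then show ?thesis using walk w(1) by (auto simp: has_walk_Suc)
    qed
  next
    assume "\<exists>z\<in>f. \<exists>l<k. has_walk (E - {f}) z v l"
    then show ?case by (meson less_SucI)
  qed
qed simp

lemma reachable_minus_edge_cases:
  assumes "reachable E u v"
  shows "reachable (E - {f}) u v \<or> (\<exists>z\<in>f. reachable (E - {f}) z v)"
proof -
  obtain k where "has_walk E u v k" using assms reachable_iff_has_walk by blast
  from has_walk_minus_edge_cases[OF this, of f] show ?thesis
    unfolding reachable_iff_has_walk by blast
qed

lemma reachable_minus_edge:
  assumes ends: "reachable (E - {{p, q}}) p q" and "reachable E u v"
  shows "reachable (E - {{p, q}}) u v"
proof -
  obtain k where "has_walk E u v k" using assms(2) reachable_iff_has_walk by blast
  then show ?thesis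
  proof (induction k arbitrary: u)
    case (Suc k)
    then obtain w where w: "{u, w} \<in> E" "has_walk E w v k" by (auto simp: has_walk_Suc)
    have "reachable (E - {{p, q}}) u w"
    proof (cases "{u, w} = {p, q}")
      case True
      then have "(u = p \<and> w = q) \<or> (u = q \<and> w = p)" by (auto simp: doubleton_eq_iff)
      then show ?thesis using ends reachable_sym by blast
    next
      case False
      then have "has_walk (E - {{p, q}}) u w 1" using w(1) by (simp add: has_walk_Suc)
      then show ?thesis unfolding reachable_iff_has_walk ..
    qed
    then show ?case using Suc.IH[OF w(2)] by (rule reachable_trans)
  qed (simp add: reachable_refl)
qed

lemma has_walk_minus_unreachable_edge:
  assumes "has_walk E u v k" "\<And>w. reachable E u w \<Longrightarrow> w \<notin> g"
  shows "has_walk (E - {g}) u v k"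
  using assms
proof (induction k arbitrary: u)
  case (Suc k)
  then obtain w where w: "{u, w} \<in> E" "has_walk E w v k" by (auto simp: has_walk_Suc)
  have "u \<notin> g" using Suc.prems(2) reachable_refl by blast
  have "has_walk E u w 1" using w(1) by (simp add: has_walk_Suc)
  then have "reachable E u w" unfolding reachable_iff_has_walk ..
  then have "has_walk (E - {g}) w v k"
    using Suc.IH[OF w(2)] Suc.prems(2) reachable_trans by blast
  with \<open>u \<notin> g\<close> show ?case using w(1) by (auto simp: has_walk_Suc)
qed simp

lemma has_walk_edge_dist:
  assumes "finite f" "f \<noteq> {}" "\<And>w. w \<in> f \<Longrightarrow> reachable E w x"
  shows "\<exists>w\<in>f. has_walk (E - {f}) w x (edge_dist E f x)"
proof -
  have "edge_dist E f x \<in> (\<lambda>u. gdist E u x) ` f"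
    unfolding edge_dist_def using assms(1,2) by (intro Min_in) auto
  then obtain w where w: "w \<in> f" "gdist E w x = edge_dist E f x" by auto
  have nearest: "edge_dist E f x \<le> gdist E z x" if "z \<in> f" for z
    unfolding edge_dist_def using assms(1) that by simp
  from has_walk_minus_edge_cases[OF has_walk_gdist[OF assms(3)[OF w(1)]], of f]
  show ?thesis
  proof
    assume "has_walk (E - {f}) w x (gdist E w x)"
    then show ?thesis using w by auto
  next
    assume "\<exists>z\<in>f. \<exists>l<gdist E w x. has_walk (E - {f}) z x l"
    then obtain z l where "z \<in> f" "l < gdist E w x" "has_walk E z x l"
      using has_walk_mono by blast
    then have "gdist E z x < gdist E w x" using gdist_le by (meson le_less_trans)
    then show ?thesis using nearest[OF \<open>z \<in> f\<close>] w(2) by simp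
  qed
qed

lemma odd_walk_lengths_to_adjacent:
  assumes no_odd: "\<And>u k. has_walk H u u k \<Longrightarrow> even k"
    and "has_walk H p q d" "even d" "has_walk H p a s" "has_walk H q b t" "{a, b} \<in> H"
  shows "odd (s + t)"
proof -
  have "has_walk H a q (s + d)" using has_walk_trans[OF has_walk_sym[OF assms(4)] assms(2)] .
  from has_walk_trans[OF this assms(5)] have "has_walk H a b (s + d + t)" .
  moreover have "has_walk H b a 1" using assms(6) by (simp add: has_walk_Suc insert_commute)
  ultimately have "has_walk H a a (s + d + t + 1)" by (rule has_walk_trans)
  then show ?thesis using no_odd assms(3) by fastforce
qed

section \<open>Connected graphs with a closed walk of odd length\<close>

definition graph_on :: "nat set \<Rightarrow> nat set set \<Rightarrow> bool" where
  "graph_on V F \<longleftrightarrow> (\<forall>g\<in>F. \<exists>a b. g = {a, b} \<and> a \<noteq> b \<and> a \<in> V \<and> b \<in> V)"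

definition connected_on :: "nat set \<Rightarrow> nat set set \<Rightarrow> bool" where
  "connected_on V F \<longleftrightarrow> (\<forall>x\<in>V. \<forall>y\<in>V. reachable F x y)"

lemma graph_on_mono: "graph_on V F \<Longrightarrow> F' \<subseteq> F \<Longrightarrow> graph_on V F'"
  unfolding graph_on_def by blast

lemma graph_on_edgeD:
  assumes "graph_on V F" "{a, b} \<in> F"
  shows "a \<noteq> b" "a \<in> V" "b \<in> V"
  using assms unfolding graph_on_def by (auto simp: doubleton_eq_iff)

lemma finite_graph_on_edges: "finite V \<Longrightarrow> graph_on V F \<Longrightarrow> finite F"
  unfolding graph_on_def by (rule finite_subset[of F "Pow V"]) auto

lemma card_le_card_edges_if_min_degree_2:
  assumes "finite V" "graph_on V F" "\<forall>x\<in>V. 2 \<le> card {g\<in>F. x \<in> g}"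
  shows "card V \<le> card F"
proof -
  have finF: "finite F" using assms(1,2) by (rule finite_graph_on_edges)
  have "(\<Sum>x\<in>V. card {g\<in>F. x \<in> g}) = (\<Sum>x\<in>V. \<Sum>g\<in>F. if x \<in> g then 1 else 0)"
    using finF by (simp add: sum.If_cases Int_def)
  also have "\<dots> = (\<Sum>g\<in>F. \<Sum>x\<in>V. if x \<in> g then 1 else 0)" by (rule sum.swap)
  also have "\<dots> = (\<Sum>g\<in>F. card (V \<inter> g))"
    using assms(1) by (simp add: sum.If_cases)
  also have "\<dots> = (\<Sum>g\<in>F. 2)"
  proof (rule sum.cong)
    fix g assume "g \<in> F"
    then obtain a b where "g = {a, b}" "a \<noteq> b" "a \<in> V" "b \<in> V"
      using assms(2) unfolding graph_on_def by blast
    then show "card (V \<inter> g) = 2" by (simp add: Int_absorb1)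
  qed simp
  finally have "(\<Sum>x\<in>V. card {g\<in>F. x \<in> g}) = 2 * card F" by simp
  moreover have "(\<Sum>x\<in>V. 2) \<le> (\<Sum>x\<in>V. card {g\<in>F. x \<in> g})"
    using assms(3) by (intro sum_mono) auto
  ultimately show ?thesis by simp
qed

lemma has_walk_remove_leaf:
  assumes leaf: "\<And>g. g \<in> F \<Longrightarrow> x \<in> g \<Longrightarrow> g = {x, p}" and "x \<noteq> p"
  shows "has_walk F u v k \<Longrightarrow> u \<noteq> x \<Longrightarrow> v \<noteq> x \<Longrightarrow>
    \<exists>l\<le>k. even (k - l) \<and> has_walk (F - {{x, p}}) u v l"
proof (induction k arbitrary: u rule: less_induct)
  case (less k)
  show ?case
  proof (cases k)
    case 0
    then show ?thesis using less.prems by auto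
  next
    case (Suc k')
    then obtain w where w: "{u, w} \<in> F" "has_walk F w v k'"
      using less.prems(1) by (auto simp: has_walk_Suc)
    show ?thesis
    proof (cases "w = x")
      case False
      then obtain l where l: "l \<le> k'" "even (k' - l)" "has_walk (F - {{x, p}}) w v l"
        using less.IH[of k' w] w(2) less.prems(3) Suc by auto
      have "{u, w} \<noteq> {x, p}" using False less.prems(2) by (auto simp: doubleton_eq_iff)
      then have "has_walk (F - {{x, p}}) u v (Suc l)" using w(1) l(3) by (auto simp: has_walk_Suc)
      then show ?thesis using l(1,2) Suc by (intro exI[of _ "Suc l"]) auto
    next
      case True
      \<comment> \<open>the walk goes p, x, p: drop this detour into the leaf\<close>
      then have u: "u = p" using leaf[OF w(1)] less.prems(2) by (auto simp: doubleton_eq_iff)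
      obtain k'' where k': "k' = Suc k''" using w(2) True less.prems(3) by (cases k') auto
      then obtain w' where w': "{x, w'} \<in> F" "has_walk F w' v k''"
        using w(2) True by (auto simp: has_walk_Suc)
      have "w' = p" using leaf[OF w'(1)] \<open>x \<noteq> p\<close> by (auto simp: doubleton_eq_iff)
      then obtain l where "l \<le> k''" "even (k'' - l)" "has_walk (F - {{x, p}}) u v l"
        using less.IH[of k'' p] w'(2) less.prems(3) Suc k' u \<open>x \<noteq> p\<close> by auto
      then show ?thesis using Suc k' by (intro exI[of _ l]) auto
    qed
  qed
qed

lemma graph_on_remove_leaf:
  assumes "graph_on V F" "\<And>g. g \<in> F \<Longrightarrow> x \<in> g \<Longrightarrow> g = {x, p}"
  shows "graph_on (V - {x}) (F - {{x, p}})"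
  using assms unfolding graph_on_def by fastforce

lemma connected_on_remove_leaf:
  assumes "connected_on V F" "\<And>g. g \<in> F \<Longrightarrow> x \<in> g \<Longrightarrow> g = {x, p}" "x \<noteq> p"
  shows "connected_on (V - {x}) (F - {{x, p}})"
  unfolding connected_on_def
proof (intro ballI)
  fix u v assume "u \<in> V - {x}" "v \<in> V - {x}"
  moreover obtain k where "has_walk F u v k"
    using assms(1) calculation unfolding connected_on_def reachable_iff_has_walk by blast
  ultimately show "reachable (F - {{x, p}}) u v"
    using has_walk_remove_leaf[OF assms(2,3)] unfolding reachable_iff_has_walk by blast
qed

lemma odd_closed_walk_remove_leaf:
  assumes leaf: "\<And>g. g \<in> F \<Longrightarrow> x \<in> g \<Longrightarrow> g = {x, p}" and "x \<noteq> p"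
    and "has_walk F u u k" "odd k"
  shows "\<exists>u' l. odd l \<and> has_walk (F - {{x, p}}) u' u' l"
proof -
  obtain u' where u': "u' \<noteq> x" "has_walk F u' u' k"
  proof (cases "u = x")
    case True
    obtain k' where k: "k = Suc k'" using \<open>odd k\<close> by (cases k) auto
    then obtain w where w: "{x, w} \<in> F" "has_walk F w x k'"
      using assms(3) True by (auto simp: has_walk_Suc)
    have "w = p" using leaf[OF w(1)] \<open>x \<noteq> p\<close> by (auto simp: doubleton_eq_iff)
    then have "has_walk F p p (k' + 1)"
      using has_walk_trans[OF w(2), of p 1] w(1) by (simp add: has_walk_Suc)
    then show ?thesis using that[of p] \<open>x \<noteq> p\<close> k by auto
  qed (use assms(3) in blast)
  then obtain l where "l \<le> k" "even (k - l)" "has_walk (F - {{x, p}}) u' u' l"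
    using has_walk_remove_leaf[OF leaf \<open>x \<noteq> p\<close>] by blast
  moreover have "odd l" using calculation(1,2) \<open>odd k\<close> by (auto simp: even_diff_nat)
  ultimately show ?thesis by blast
qed

lemma leaf_if_degree_less_2:
  assumes "finite V" "graph_on V F" "connected_on V F" "x \<in> V" "y \<in> V" "x \<noteq> y"
    and "card {g\<in>F. x \<in> g} < 2"
  obtains p where "x \<noteq> p" "p \<in> V" "{x, p} \<in> F" "\<And>g. g \<in> F \<Longrightarrow> x \<in> g \<Longrightarrow> g = {x, p}"
proof -
  obtain k where "has_walk F x y k"
    using assms(3-5) unfolding connected_on_def reachable_iff_has_walk by blast
  with \<open>x \<noteq> y\<close> obtain p where p: "{x, p} \<in> F"
    by (cases k) (auto simp: has_walk_Suc)
  have "finite {g\<in>F. x \<in> g}" using finite_graph_on_edges[OF assms(1,2)] by simp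
  moreover have "card {g\<in>F. x \<in> g} \<le> Suc 0" using assms(7) by simp
  ultimately have single: "\<forall>g\<in>{g\<in>F. x \<in> g}. \<forall>g'\<in>{g\<in>F. x \<in> g}. g = g'"
    using card_le_Suc0_iff_eq by blast
  have "g = {x, p}" if "g \<in> F" "x \<in> g" for g
    using single that p by simp
  then show ?thesis using that p graph_on_edgeD[OF assms(2) p] by blast
qed

lemma card_le_card_edges_if_odd_closed_walk:
  assumes "finite V" "graph_on V F" "connected_on V F" "has_walk F u u k" "odd k"
  shows "card V \<le> card F"
  using assms
proof (induction "card V" arbitrary: V F u k rule: less_induct)
  case less
  show ?case
  proof (cases "\<forall>x\<in>V. 2 \<le> card {g\<in>F. x \<in> g}")
    case True
    then show ?thesis using card_le_card_edges_if_min_degree_2 less.prems(1,2) by blast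
  next
    case False
    then obtain x where x: "x \<in> V" "card {g\<in>F. x \<in> g} < 2" by (auto simp: not_le)
    obtain k' where "k = Suc k'" using \<open>odd k\<close> by (cases k) auto
    then obtain w where "{u, w} \<in> F" using less.prems(4) by (auto simp: has_walk_Suc)
    then have "u \<noteq> w" "u \<in> V" "w \<in> V" using graph_on_edgeD[OF less.prems(2)] by auto
    then obtain y where y: "y \<in> V" "x \<noteq> y" by blast
    obtain p where p: "x \<noteq> p" "{x, p} \<in> F" "\<And>g. g \<in> F \<Longrightarrow> x \<in> g \<Longrightarrow> g = {x, p}"
      using leaf_if_degree_less_2[OF less.prems(1-3) x(1) y x(2)] by blast
    obtain u' l where walk': "has_walk (F - {{x, p}}) u' u' l" "odd l"
      using odd_closed_walk_remove_leaf[OF p(3,1) less.prems(4,5)] by blast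
    have "card (V - {x}) < card V" using card_Diff1_less[OF less.prems(1) x(1)] .
    then have "card (V - {x}) \<le> card (F - {{x, p}})"
      using less.hyps less.prems(1) graph_on_remove_leaf[OF less.prems(2) p(3)]
        connected_on_remove_leaf[OF less.prems(3) p(3,1)] walk' by blast
    moreover have "finite F" using finite_graph_on_edges[OF less.prems(1,2)] .
    then have "0 < card F" using p(2) card_gt_0_iff by blast
    moreover have "0 < card V" using less.prems(1) x(1) card_gt_0_iff by blast
    ultimately show ?thesis using x(1) p(2) \<open>finite F\<close> by (simp add: card_Diff_singleton)
  qed
qed

section \<open>Cycles\<close>

definition cycle_edge :: "nat list \<Rightarrow> nat \<Rightarrow> nat set" where
  "cycle_edge cs i = {cs ! i, cs ! (Suc i mod length cs)}"

lemma cycle_edges_eq: "cycle_edges cs = cycle_edge cs ` {..<length cs}"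
  unfolding cycle_edges_def cycle_edge_def by auto

lemma cycle_edge_subset_set: "g \<in> cycle_edges cs \<Longrightarrow> g \<subseteq> set cs"
  unfolding cycle_edges_eq cycle_edge_def by (auto intro!: nth_mem mod_less_divisor)

lemma has_walk_around_cycle:
  assumes "cs \<noteq> []"
  shows "has_walk (cycle_edges cs) (cs ! 0) (cs ! (k mod length cs)) k"
proof (induction k)
  case (Suc k)
  have "cycle_edge cs (k mod length cs) \<in> cycle_edges cs"
    using assms by (simp add: cycle_edges_eq)
  then have "has_walk (cycle_edges cs) (cs ! (k mod length cs)) (cs ! (Suc k mod length cs)) 1"
    by (simp add: cycle_edge_def has_walk_Suc mod_Suc_eq)
  from has_walk_trans[OF Suc.IH this] show ?case by simp
qed simp

lemma cycle_edge_inj: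
  assumes "is_cycle E cs"
  shows "inj_on (cycle_edge cs) {..<length cs}"
proof (rule inj_onI)
  let ?L = "length cs"
  fix i j assume "i \<in> {..<?L}" "j \<in> {..<?L}" and eq: "cycle_edge cs i = cycle_edge cs j"
  then have i: "i < ?L" and j: "j < ?L" by simp_all
  have L: "3 \<le> ?L" "distinct cs" using assms unfolding is_cycle_def by auto
  have idx: "cs ! a = cs ! b \<longleftrightarrow> a = b" if "a < ?L" "b < ?L" for a b
    using nth_eq_iff_index_eq[OF L(2)] that by blast
  have mods: "Suc i mod ?L < ?L" "Suc j mod ?L < ?L" using L(1) by (auto intro: mod_less_divisor)
  from eq have "cs ! i = cs ! j \<or> cs ! i = cs ! (Suc j mod ?L) \<and> cs ! (Suc i mod ?L) = cs ! j"
    unfolding cycle_edge_def by (auto simp: doubleton_eq_iff)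
  then show "i = j"
  proof
    assume "cs ! i = cs ! j"
    then show ?thesis using idx[OF i j] by simp
  next
    assume swap: "cs ! i = cs ! (Suc j mod ?L) \<and> cs ! (Suc i mod ?L) = cs ! j"
    have ij: "i = Suc j mod ?L" using swap idx[OF i mods(2)] by blast
    have ji: "Suc i mod ?L = j" using swap idx[OF mods(1) j] by blast
    show ?thesis
    proof (cases "Suc j < ?L")
      case True
      then have j2: "j = Suc (Suc j) mod ?L" using ij ji by simp
      show ?thesis
      proof (cases "Suc (Suc j) < ?L")
        case True
        then show ?thesis using j2 by simp
      next
        case False
        then have "Suc (Suc j) = ?L" using \<open>Suc j < ?L\<close> by simp
        then show ?thesis using j2 L(1) by simp
      qed
    next
      case False
      then have "Suc j = ?L" using j by simp
      then have "i = 0" using ij by simp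
      then have "j = 1" using ji L(1) by simp
      then show ?thesis using \<open>Suc j = ?L\<close> L(1) by simp
    qed
  qed
qed

lemma has_walk_around_cycle_avoiding:
  assumes "is_cycle E cs" "i < length cs"
  shows "has_walk (cycle_edges cs - {cycle_edge cs i}) (cs ! (Suc i mod length cs)) (cs ! i)
    (length cs - 1)"
proof -
  let ?L = "length cs" and ?H = "cycle_edges cs - {cycle_edge cs i}"
  have walk: "has_walk ?H (cs ! (Suc i mod ?L)) (cs ! ((Suc i + m) mod ?L)) m" if "m < ?L" for m
    using that
  proof (induction m)
    case (Suc m)
    let ?j = "(Suc i + m) mod ?L"
    have j: "?j < ?L" using assms(2) by (auto intro: mod_less_divisor)
    have "?j \<noteq> i"
    proof (cases "Suc i + m < ?L")
      case False
      then have "?j = Suc i + m - ?L" using assms(2) Suc.prems by (simp add: le_mod_geq)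
      then show ?thesis using Suc.prems False by linarith
    qed simp
    then have "cycle_edge cs ?j \<noteq> cycle_edge cs i"
      using inj_onD[OF cycle_edge_inj[OF assms(1)]] j assms(2) by blast
    moreover have "cycle_edge cs ?j \<in> cycle_edges cs" using j by (simp add: cycle_edges_eq)
    ultimately have "has_walk ?H (cs ! ?j) (cs ! ((Suc i + Suc m) mod ?L)) 1"
      by (simp add: cycle_edge_def has_walk_Suc mod_Suc_eq)
    from has_walk_trans[OF Suc.IH this] Suc.prems show ?case by simp
  qed simp
  have "Suc i + (?L - 1) = i + ?L" using assms(2) by linarith
  then have "(Suc i + (?L - 1)) mod ?L = i" using assms(2) by simp
  then show ?thesis using walk[of "?L - 1"] assms(2) by simp
qed

lemma comp_C_closed: "x \<in> comp_C E f cs \<Longrightarrow> reachable (E - {f}) x y \<Longrightarrow> y \<in> comp_C E f cs"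
  unfolding comp_C_def using reachable_trans by blast

lemma comp_C_adjacent_iff:
  assumes "{a, b} \<in> E" "{a, b} \<noteq> f"
  shows "a \<in> comp_C E f cs \<longleftrightarrow> b \<in> comp_C E f cs"
proof -
  have "has_walk (E - {f}) a b 1" using assms by (simp add: has_walk_Suc)
  then have "reachable (E - {f}) a b" unfolding reachable_iff_has_walk ..
  then show ?thesis using comp_C_closed reachable_sym by blast
qed

lemma set_subset_comp_C: "set cs \<subseteq> comp_C E f cs"
  unfolding comp_C_def using reachable_refl by blast

section \<open>The inverse of the incidence matrix\<close>

lemma minus_one_power_add_eq_0: "odd (s + t) \<Longrightarrow> (-1 :: 'a :: ring_1) ^ s + (-1) ^ t = 0"
  by (cases "even s") auto

lemma index_mult_incidence_mat:
  assumes "dim_col A = n" "i < dim_row A" "k < n" "e k = {a, b}" "a \<noteq> b" "a < n" "b < n"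
  shows "(A * incidence_mat n e) $$ (i, k) = A $$ (i, a) + A $$ (i, b)"
proof -
  have "(A * incidence_mat n e) $$ (i, k) =
      (\<Sum>j\<in>{0..<n}. A $$ (i, j) * (if j \<in> e k then 1 else 0))"
    using assms(1-3) by (simp add: incidence_mat_def scalar_prod_def)
  also have "\<dots> = (\<Sum>j\<in>{0..<n} \<inter> e k. A $$ (i, j))"
    by (simp add: sum.inter_restrict[symmetric] if_distrib cong: if_cong)
  also have "{0..<n} \<inter> e k = {a, b}" using assms(4,6,7) by auto
  finally show ?thesis using assms(5) by simp
qed

lemma left_inverse_mat_imp_invertible:
  fixes A B :: "'a :: field mat"
  assumes "A \<in> carrier_mat n n" "B \<in> carrier_mat n n" "B * A = 1\<^sub>m n"
  shows "invertible_mat A" "A * B = 1\<^sub>m n"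
proof -
  show AB: "A * B = 1\<^sub>m n" using mat_mult_left_right_inverse[OF assms(2,1,3)] .
  show "invertible_mat A"
    unfolding invertible_mat_def inverts_mat_def using assms AB
    by (intro conjI exI[of _ B]) (auto simp: square_mat.simps)
qed

locale odd_unicyclic =
  fixes n :: nat and e :: "nat \<Rightarrow> nat set" and cs :: "nat list"
  assumes unicyclic: "unicyclic n e"
    and cycle: "is_cycle (e ` {..<n}) cs"
    and odd_cycle: "odd (length cs)"
begin

abbreviation E :: "nat set set" where "E \<equiv> e ` {..<n}"

lemma graph_on_E: "graph_on {..<n} E"
  using unicyclic unfolding unicyclic_def graph_on_def by blast

lemma connected_on_E: "connected_on {..<n} E"
  using unicyclic unfolding unicyclic_def connected_on_def by blast

lemma card_E: "card E = n"
  using unicyclic card_image unfolding unicyclic_def by fastforce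

lemma mem_E_elim:
  assumes "f \<in> E"
  obtains u v where "f = {u, v}" "u \<noteq> v" "u < n" "v < n"
  using assms graph_on_E unfolding graph_on_def by blast

lemma edge_ends_less:
  assumes "{a, b} \<in> E"
  shows "a < n" "b < n"
  using graph_on_edgeD[OF graph_on_E assms] by auto

lemma cycle_edges_subset: "cycle_edges cs \<subseteq> E"
  using cycle unfolding is_cycle_def cycle_edges_def by auto

lemma cycle_nonempty: "cs \<noteq> []"
  using cycle unfolding is_cycle_def by auto

lemma cycle_vertex_less: "c \<in> set cs \<Longrightarrow> c < n"
proof -
  assume "c \<in> set cs"
  then obtain i where i: "i < length cs" "c = cs ! i" by (auto simp: in_set_conv_nth)
  then have "cycle_edge cs i \<in> E" using cycle_edges_subset by (auto simp: cycle_edges_eq)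
  then obtain u v where "cycle_edge cs i = {u, v}" "u < n" "v < n" by (rule mem_E_elim)
  then show "c < n" using i(2) by (auto simp: cycle_edge_def doubleton_eq_iff)
qed

lemma connected_on_minus_edge:
  assumes "reachable (E - {{u, v}}) u v"
  shows "connected_on {..<n} (E - {{u, v}})"
  using reachable_minus_edge[OF assms] connected_on_E unfolding connected_on_def by blast

lemma even_closed_walk_if_connected_minus_edge:
  assumes "f \<in> E" "connected_on {..<n} (E - {f})" "has_walk (E - {f}) u u k"
  shows "even k"
proof (rule ccontr)
  assume "odd k"
  have "graph_on {..<n} (E - {f})" using graph_on_mono[OF graph_on_E] by blast
  then have "card {..<n} \<le> card (E - {f})"
    using card_le_card_edges_if_odd_closed_walk[OF finite_lessThan _ assms(2,3) \<open>odd k\<close>] by simp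
  moreover have "card (E - {f}) = n - 1" using assms(1) card_E by (simp add: card_Diff_singleton)
  moreover have "0 < n" using assms(1) by auto
  ultimately show False by simp
qed

lemma connected_on_minus_cycle_edge:
  assumes "f \<in> cycle_edges cs"
  shows "connected_on {..<n} (E - {f})"
proof -
  let ?L = "length cs"
  obtain i where i: "i < ?L" "f = cycle_edge cs i" using assms by (auto simp: cycle_edges_eq)
  have "cycle_edges cs - {f} \<subseteq> E - {f}" using cycle_edges_subset by blast
  then have "has_walk (E - {f}) (cs ! (Suc i mod ?L)) (cs ! i) (?L - 1)"
    using has_walk_mono[OF has_walk_around_cycle_avoiding[OF cycle i(1)]] i(2) by blast
  then have "reachable (E - {f}) (cs ! i) (cs ! (Suc i mod ?L))"
    by (meson has_walk_sym reachable_iff_has_walk)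
  then show ?thesis using connected_on_minus_edge i(2) unfolding cycle_edge_def by simp
qed

lemma even_closed_walk_minus_cycle_edge:
  assumes "f \<in> cycle_edges cs" "has_walk (E - {f}) u u k"
  shows "even k"
  using even_closed_walk_if_connected_minus_edge[OF _ connected_on_minus_cycle_edge[OF assms(1)]]
    assms cycle_edges_subset by blast

lemma comp_C_eq:
  assumes "f \<notin> cycle_edges cs"
  shows "comp_C E f cs = {x. reachable (E - {f}) (cs ! 0) x}"
proof -
  have sub: "cycle_edges cs \<subseteq> E - {f}" using cycle_edges_subset assms by blast
  have "reachable (E - {f}) (cs ! 0) (cs ! k)" if "k < length cs" for k
  proof -
    have "has_walk (cycle_edges cs) (cs ! 0) (cs ! k) k"
      using has_walk_around_cycle[OF cycle_nonempty, of k] that by simp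
    then show ?thesis using has_walk_mono[OF _ sub] unfolding reachable_iff_has_walk by blast
  qed
  then have c: "reachable (E - {f}) (cs ! 0) c" if "c \<in> set cs" for c
    using that by (auto simp: in_set_conv_nth)
  show ?thesis
  proof (intro equalityI subsetI)
    fix x assume "x \<in> comp_C E f cs"
    then obtain c where "c \<in> set cs" "reachable (E - {f}) c x" unfolding comp_C_def by blast
    then show "x \<in> {x. reachable (E - {f}) (cs ! 0) x}" using c reachable_trans by blast
  next
    fix x assume "x \<in> {x. reachable (E - {f}) (cs ! 0) x}"
    then show "x \<in> comp_C E f cs" unfolding comp_C_def using cycle_nonempty by auto
  qed
qed

lemma endpoint_in_comp_C:
  assumes "f = {u, v}" "u < n"
  shows "u \<in> comp_C E f cs \<or> v \<in> comp_C E f cs"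
proof -
  have c: "cs ! 0 \<in> set cs" using cycle_nonempty by simp
  then have "reachable E u (cs ! 0)"
    using connected_on_E assms(2) cycle_vertex_less unfolding connected_on_def by blast
  from reachable_minus_edge_cases[OF this, of f] obtain z where
    "z \<in> f" "reachable (E - {f}) z (cs ! 0)"
    using assms(1) by blast
  then have "z \<in> comp_C E f cs" using c reachable_sym unfolding comp_C_def by blast
  then show ?thesis using \<open>z \<in> f\<close> assms(1) by blast
qed

lemma endpoints_not_both_in_comp_C:
  assumes "f \<in> E" "f \<notin> cycle_edges cs" "f = {u, v}"
  shows "\<not> (u \<in> comp_C E f cs \<and> v \<in> comp_C E f cs)"
proof
  assume "u \<in> comp_C E f cs \<and> v \<in> comp_C E f cs"
  then have u: "reachable (E - {f}) (cs ! 0) u" and v: "reachable (E - {f}) (cs ! 0) v"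
    using comp_C_eq[OF assms(2)] by auto
  have "reachable (E - {{u, v}}) u v"
    using reachable_trans[OF reachable_sym[OF u] v] assms(3) by simp
  then have connected: "connected_on {..<n} (E - {f})"
    using connected_on_minus_edge assms(3) by simp
  have "cycle_edges cs \<subseteq> E - {f}" using cycle_edges_subset assms(2) by blast
  moreover have "has_walk (cycle_edges cs) (cs ! 0) (cs ! 0) (length cs)"
    using has_walk_around_cycle[OF cycle_nonempty, of "length cs"] by simp
  ultimately have "has_walk (E - {f}) (cs ! 0) (cs ! 0) (length cs)"
    using has_walk_mono by blast
  then show False
    using even_closed_walk_if_connected_minus_edge[OF assms(1) connected] odd_cycle by simp
qed

lemma has_walk_edge_dist_minus:
  assumes "f \<in> E" "x < n"
  shows "\<exists>w\<in>f. has_walk (E - {f}) w x (edge_dist E f x)"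
proof (rule has_walk_edge_dist)
  obtain u v where "f = {u, v}" "u < n" "v < n" using assms(1) by (rule mem_E_elim)
  then show "finite f" "f \<noteq> {}" "\<And>w. w \<in> f \<Longrightarrow> reachable E w x"
    using connected_on_E assms(2) unfolding connected_on_def by auto
qed

lemma odd_edge_dist_sum_cycle_edge:
  assumes f: "f \<in> cycle_edges cs" and ab: "{a, b} \<in> E" "{a, b} \<noteq> f"
  shows "odd (edge_dist E f a + edge_dist E f b)"
proof -
  let ?H = "E - {f}" and ?L = "length cs"
  obtain i where i: "i < ?L" "f = cycle_edge cs i" using f by (auto simp: cycle_edges_eq)
  have "f \<in> E" using f cycle_edges_subset by blast
  moreover have "a < n" "b < n" using edge_ends_less[OF ab(1)] .
  ultimately obtain p q where p: "p \<in> f" "has_walk ?H p a (edge_dist E f a)"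
    and q: "q \<in> f" "has_walk ?H q b (edge_dist E f b)"
    using has_walk_edge_dist_minus by meson
  have "\<exists>d. even d \<and> has_walk ?H p q d"
  proof (cases "p = q")
    case True
    then show ?thesis by (intro exI[of _ 0]) simp
  next
    case False
    have "cycle_edges cs - {f} \<subseteq> ?H" using cycle_edges_subset by blast
    then have detour: "has_walk ?H (cs ! (Suc i mod ?L)) (cs ! i) (?L - 1)"
      using has_walk_mono[OF has_walk_around_cycle_avoiding[OF cycle i(1)]] i(2) by blast
    from False p(1) q(1) i(2)
    have "p = cs ! (Suc i mod ?L) \<and> q = cs ! i \<or> p = cs ! i \<and> q = cs ! (Suc i mod ?L)"
      by (auto simp: cycle_edge_def)
    then have "has_walk ?H p q (?L - 1)" using detour has_walk_sym by blast
    moreover have "even (?L - 1)" using odd_cycle by simp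
    ultimately show ?thesis by blast
  qed
  then obtain d where "even d" "has_walk ?H p q d" by blast
  moreover have "has_walk ?H u u k \<Longrightarrow> even k" for u k
    using even_closed_walk_minus_cycle_edge[OF f] .
  ultimately show ?thesis using odd_walk_lengths_to_adjacent p(2) q(2) ab by blast
qed

lemma has_walk_outside_comp_C_avoids_cycle_edge:
  assumes "g \<in> cycle_edges cs" "has_walk (E - {f}) p x k" "x \<notin> comp_C E f cs"
  shows "has_walk (E - {g}) p x k"
proof -
  have "w \<notin> g" if "reachable (E - {f}) p w" for w
  proof
    assume "w \<in> g"
    then have "w \<in> comp_C E f cs" using cycle_edge_subset_set[OF assms(1)] set_subset_comp_C by blast
    then have "p \<in> comp_C E f cs" using comp_C_closed reachable_sym[OF that] by blast
    moreover have "reachable (E - {f}) p x" using assms(2) reachable_iff_has_walk by blast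
    ultimately show False using comp_C_closed assms(3) by blast
  qed
  then have "has_walk (E - {f} - {g}) p x k" using has_walk_minus_unreachable_edge assms(2) by blast
  then show ?thesis using has_walk_mono by blast
qed

lemma odd_edge_dist_sum_outside_comp_C:
  assumes f: "f \<in> E" "f \<notin> cycle_edges cs" and ab: "{a, b} \<in> E" "{a, b} \<noteq> f"
    and a: "a \<notin> comp_C E f cs"
  shows "odd (edge_dist E f a + edge_dist E f b)"
proof -
  let ?H = "E - {f}"
  have "a < n" "b < n" using edge_ends_less[OF ab(1)] .
  then obtain p q where p: "p \<in> f" "has_walk ?H p a (edge_dist E f a)"
    and q: "q \<in> f" "has_walk ?H q b (edge_dist E f b)"
    using has_walk_edge_dist_minus f(1) by meson
  have b: "b \<notin> comp_C E f cs" using a comp_C_adjacent_iff[OF ab] by blast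
  have "p \<notin> comp_C E f cs" "q \<notin> comp_C E f cs"
    using p(2) q(2) a b comp_C_closed reachable_iff_has_walk by blast+
  moreover obtain u v where "f = {u, v}" "u < n" using f(1) by (rule mem_E_elim)
  ultimately have "p = q" using endpoint_in_comp_C p(1) q(1) by blast
  define g where "g = cycle_edge cs 0"
  have g: "g \<in> cycle_edges cs" using cycle_nonempty by (auto simp: g_def cycle_edges_eq)
  have "has_walk (E - {g}) u u k \<Longrightarrow> even k" for u k
    using even_closed_walk_minus_cycle_edge[OF g] .
  moreover have "a \<notin> g" using a cycle_edge_subset_set[OF g] set_subset_comp_C by blast
  then have "{a, b} \<in> E - {g}" using ab(1) by auto
  moreover have "has_walk (E - {g}) p p 0" by simp
  ultimately show ?thesis
    using odd_walk_lengths_to_adjacent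
      has_walk_outside_comp_C_avoids_cycle_edge[OF g p(2) a]
      has_walk_outside_comp_C_avoids_cycle_edge[OF g q(2)[folded \<open>p = q\<close>] b]
    by blast
qed

lemma index_claimed_inverse:
  assumes "i < n" "j < n"
  shows "claimed_inverse n e cs $$ (i, j) =
    (if e i \<in> cycle_edges cs then (-1) ^ edge_dist E (e i) j / 2
     else if j \<in> comp_C E (e i) cs then 0 else (-1) ^ edge_dist E (e i) j)"
  using assms unfolding claimed_inverse_def by (simp add: Let_def)

lemma claimed_inverse_diagonal:
  assumes "i < n" "e i = {a, b}" "a \<noteq> b"
  shows "claimed_inverse n e cs $$ (i, a) + claimed_inverse n e cs $$ (i, b) = 1"
proof -
  have ei: "e i \<in> E" using assms(1) by simp
  then have "a < n" "b < n" using edge_ends_less[of a b] assms(2) by simp_all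
  moreover have "edge_dist E (e i) a = 0" "edge_dist E (e i) b = 0"
    using assms(2) by (simp_all add: edge_dist_def)
  moreover have "e i \<notin> cycle_edges cs \<Longrightarrow>
      (a \<in> comp_C E (e i) cs) \<noteq> (b \<in> comp_C E (e i) cs)"
    using endpoint_in_comp_C[OF assms(2)] endpoints_not_both_in_comp_C[OF ei _ assms(2)] \<open>a < n\<close>
    by blast
  ultimately show ?thesis using assms(1) by (auto simp: index_claimed_inverse)
qed

lemma claimed_inverse_off_diagonal:
  assumes "i < n" "{a, b} \<in> E" "{a, b} \<noteq> e i"
  shows "claimed_inverse n e cs $$ (i, a) + claimed_inverse n e cs $$ (i, b) = 0"
proof -
  have ei: "e i \<in> E" using assms(1) by simp
  have "a < n" "b < n" using edge_ends_less[OF assms(2)] .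
  then have entries: "claimed_inverse n e cs $$ (i, a) + claimed_inverse n e cs $$ (i, b) =
    (if e i \<in> cycle_edges cs then ((-1) ^ edge_dist E (e i) a + (-1) ^ edge_dist E (e i) b) / 2
     else if a \<in> comp_C E (e i) cs then 0
     else (-1) ^ edge_dist E (e i) a + (-1) ^ edge_dist E (e i) b)"
    using assms(1) comp_C_adjacent_iff[OF assms(2,3)]
    by (simp add: index_claimed_inverse add_divide_distrib)
  show ?thesis
  proof (cases "e i \<in> cycle_edges cs")
    case True
    have "(-1::real) ^ edge_dist E (e i) a + (-1) ^ edge_dist E (e i) b = 0"
      using odd_edge_dist_sum_cycle_edge[OF True assms(2,3)] by (rule minus_one_power_add_eq_0)
    then show ?thesis using entries True by simp
  next
    case False
    show ?thesis
    proof (cases "a \<in> comp_C E (e i) cs")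
      case outside: False
      have "(-1::real) ^ edge_dist E (e i) a + (-1) ^ edge_dist E (e i) b = 0"
        using odd_edge_dist_sum_outside_comp_C[OF ei False assms(2,3) outside]
        by (rule minus_one_power_add_eq_0)
      then show ?thesis using entries False by simp
    qed (use entries False in simp)
  qed
qed

lemma claimed_inverse_mult_incidence_mat: "claimed_inverse n e cs * incidence_mat n e = 1\<^sub>m n"
proof (rule eq_matI)
  fix i k assume "i < dim_row (1\<^sub>m n)" "k < dim_col (1\<^sub>m n)"
  then have i: "i < n" and k: "k < n" by simp_all
  have "e k \<in> E" using k by simp
  then obtain a b where ab: "e k = {a, b}" "a \<noteq> b" "a < n" "b < n" by (rule mem_E_elim)
  have "(claimed_inverse n e cs * incidence_mat n e) $$ (i, k) =
      claimed_inverse n e cs $$ (i, a) + claimed_inverse n e cs $$ (i, b)"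
    using i k ab by (intro index_mult_incidence_mat) (simp_all add: claimed_inverse_def)
  also have "\<dots> = (if i = k then 1 else 0)"
  proof (cases "i = k")
    case False
    then have "e k \<noteq> e i" using unicyclic i k unfolding unicyclic_def inj_on_def by blast
    then show ?thesis
      using claimed_inverse_off_diagonal[OF i] ab(1) k False by (metis image_eqI lessThan_iff)
  qed (use claimed_inverse_diagonal[OF i] ab in simp)
  finally show "(claimed_inverse n e cs * incidence_mat n e) $$ (i, k) = 1\<^sub>m n $$ (i, k)"
    using i k by simp
qed (simp_all add: claimed_inverse_def incidence_mat_def)

end

theorem mainTheorem5:
  fixes n :: nat and e :: "nat \<Rightarrow> nat set" and cs :: "nat list"
  assumes "unicyclic n e"
    and "is_cycle (e ` {..<n}) cs"
    and "odd (length cs)"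
  shows "invertible_mat (incidence_mat n e)
    \<and> incidence_mat n e * claimed_inverse n e cs = 1\<^sub>m n
    \<and> claimed_inverse n e cs * incidence_mat n e = 1\<^sub>m n"
proof -
  interpret odd_unicyclic n e cs using assms by unfold_locales
  have "incidence_mat n e \<in> carrier_mat n n" "claimed_inverse n e cs \<in> carrier_mat n n"
    by (simp_all add: incidence_mat_def claimed_inverse_def)
  with claimed_inverse_mult_incidence_mat show ?thesis
    using left_inverse_mat_imp_invertible by blast
qed

end
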